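(* Let $\beta_Q'\ge2$ and set $\delta^{(a)}=\beta_Q'\bar\sigma_a^2\frac{\log K}{K}$. Let $\{\mathbf Q_u(t),t\ge0\}$ be a Brownian motion with drift $-\delta^{(a)}$ and variance parameter $\bar\sigma_a^2$, reflected at $K/2$ (taking values in $[K/2,\infty)$, with no upper boundary), and define $p^{\mathcal Q}_{\text{overflow}}(K)=\frac12\lim_{t\to\infty}\mathbb P(\mathbf Q_u(t)>K)$. Then $p^{\mathcal Q}_{\text{overflow}}(K)=O(K^{-\beta_Q'})$ as $K\to\infty$.
   Context: This arises from the energy management scheme $\mathcal Q$ for a node with data buffer of size $K$, arrivals of mean $\lambda$ and asymptotic variance $\bar\sigma_a^2=\lim_{\tau\to\infty}\frac1\tau\mathrm{Var}(\sum_{t=1}^\tau a(t))$, under which the queue always drifts toward level $K/2$ at rate $\delta^{(a)}$ (service rate $\lambda+\delta^{(a)}$ when $Q(t)\ge K/2$ and $\lambda-\delta^{(a)}$ when $Q(t)<K/2$). In the diffusion (heavy-traffic) approximation $\mathbf Q(t)$ of the queue, with the upper boundary removed, $\mathbf Q_u(t)=|\mathbf Q(t)-K/2|+K/2$ is the reflected Brownian motion described in the claim. *)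

theory Defs
  imports "HOL-Probability.Probability" "HOL-Library.Landau_Symbols"
begin

definition std_brownian_motion :: "'a measure \<Rightarrow> (real \<Rightarrow> 'a \<Rightarrow> real) \<Rightarrow> bool" where
  "std_brownian_motion M W \<longleftrightarrow>
     prob_space M \<and>
     (\<forall>t\<ge>0. W t \<in> borel_measurable M) \<and>
     (\<forall>\<omega>\<in>space M. W 0 \<omega> = 0 \<and> continuous_on {0..} (\<lambda>t. W t \<omega>)) \<and>
     (\<forall>s t. 0 \<le> s \<longrightarrow> s < t \<longrightarrow>
        distributed M lborel (\<lambda>\<omega>. W t \<omega> - W s \<omega>) (normal_density 0 (sqrt (t - s)))) \<and>
     (\<forall>ts::real list. sorted_wrt (<) ts \<longrightarrow> (\<forall>t\<in>set ts. 0 \<le> t) \<longrightarrow>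
        prob_space.indep_vars M (\<lambda>_. borel)
          (\<lambda>i \<omega>. W (ts ! Suc i) \<omega> - W (ts ! i) \<omega>) {..<length ts - 1})"

definition drifted_bm :: "(real \<Rightarrow> 'a \<Rightarrow> real) \<Rightarrow> real \<Rightarrow> real \<Rightarrow> real \<Rightarrow> 'a \<Rightarrow> real" where
  "drifted_bm W mu s2 t \<omega> = sqrt s2 * W t \<omega> + mu * t"

text \<open>Reflection at level b via the Skorokhod map, process started at b.\<close>
definition reflected_bm :: "(real \<Rightarrow> 'a \<Rightarrow> real) \<Rightarrow> real \<Rightarrow> real \<Rightarrow> real \<Rightarrow> real \<Rightarrow> 'a \<Rightarrow> real" where
  "reflected_bm W mu s2 b t \<omega> =
     b + drifted_bm W mu s2 t \<omega> - min 0 (Inf ((\<lambda>s. drifted_bm W mu s2 s \<omega>) ` {0..t}))"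

definition delta_a :: "real \<Rightarrow> real \<Rightarrow> nat \<Rightarrow> real" where
  "delta_a beta s2 K = beta * s2 * ln (real K) / real K"

definition p_overflow :: "'a measure \<Rightarrow> (real \<Rightarrow> 'a \<Rightarrow> real) \<Rightarrow> real \<Rightarrow> real \<Rightarrow> nat \<Rightarrow> real" where
  "p_overflow M W s2 beta K =
     1/2 * Lim at_top (\<lambda>t. measure M
        {\<omega> \<in> space M. reflected_bm W (- delta_a beta s2 K) s2 (real K / 2) t \<omega> > real K})"

end

theory Submission
  imports Defs
begin

text \<open>Since \<open>\<delta> K / \<sigma>\<^sup>2 = \<beta> ln K\<close>, it suffices to show that the tail of the reflected
  process above \<open>b + a\<close> is at most \<open>exp (-2 \<delta> a / \<sigma>\<^sup>2)\<close> with \<open>a = K/2\<close>. By Skorokhod's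
  formula the reflected process exceeds \<open>b + a\<close> at time \<open>t\<close> iff the free Brownian motion with
  drift rose by more than \<open>a\<close> over some \<open>[s, t]\<close>; reversing time turns this into the event
  that the free process itself exceeds \<open>a\<close> before \<open>t\<close>, whose probability increases in
  \<open>t\<close> and hence converges. On a dyadic grid the process is a Gaussian random walk, for which
  \<open>exp (\<theta> S\<^sub>k)\<close> with \<open>\<theta> = 2 \<delta> / \<sigma>\<^sup>2\<close> is a supermartingale, giving the bound
  \<open>exp (-\<theta> a)\<close>; continuity of the paths passes it to continuous time.\<close>

lemma partial_sum_exceeds_in_sets:
  fixes \<nu> :: "real measure" and g :: "real \<Rightarrow> real"
  assumes g: "g \<in> borel_measurable \<nu>" and K: "finite K" and J: "\<And>k. k \<in> K \<Longrightarrow> J k \<subseteq> I"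
  shows "{x \<in> space (PiM I (\<lambda>_. \<nu>)). \<exists>k\<in>K. c < (\<Sum>j\<in>J k. g (x j))} \<in> sets (PiM I (\<lambda>_. \<nu>))"
proof -
  have "(\<lambda>x. \<Sum>j\<in>J k. g (x j)) \<in> borel_measurable (PiM I (\<lambda>_. \<nu>))" if "k \<in> K" for k
    using J[OF that] by (intro borel_measurable_sum measurable_compose[OF measurable_component_singleton[of _ I "\<lambda>_. \<nu>"] g]) auto
  moreover have "{x \<in> space (PiM I (\<lambda>_. \<nu>)). \<exists>k\<in>K. c < (\<Sum>j\<in>J k. g (x j))}
      = (\<Union>k\<in>K. {x \<in> space (PiM I (\<lambda>_. \<nu>)). c < (\<Sum>j\<in>J k. g (x j))})"
    by auto
  ultimately show ?thesis
    using K by auto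
qed

lemma sum_fun_upd_atLeastLessThan_Suc:
  "(\<Sum>j\<in>{m..<m + Suc k}. g ((x(m := y)) j)) = g y + (\<Sum>j\<in>{Suc m..<Suc m + k}. g (x j))"
proof -
  have "(\<Sum>j\<in>{m..<m + Suc k}. g ((x(m := y)) j)) = g y + (\<Sum>j\<in>{Suc m..<m + Suc k}. g ((x(m := y)) j))"
    using sum.atLeast_Suc_lessThan[of m "m + Suc k" "\<lambda>j. g ((x(m := y)) j)"] by simp
  also have "(\<Sum>j\<in>{Suc m..<m + Suc k}. g ((x(m := y)) j)) = (\<Sum>j\<in>{Suc m..<Suc m + k}. g (x j))"
    by (rule sum.cong) auto
  finally show ?thesis .
qed

lemma partial_sum_exceeds_fun_upd_iff:
  fixes g :: "'a \<Rightarrow> real"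
  assumes "0 \<le> c"
  shows "(\<exists>k\<in>{..Suc N}. c < (\<Sum>j\<in>{n..<n+k}. g ((x(n := y)) j))) \<longleftrightarrow>
    (\<exists>k\<in>{..N}. c - g y < (\<Sum>j\<in>{Suc n..<Suc n+k}. g (x j)))"
proof
  assume "\<exists>k\<in>{..Suc N}. c < (\<Sum>j\<in>{n..<n+k}. g ((x(n := y)) j))"
  then obtain k where k: "k \<le> Suc N" "c < (\<Sum>j\<in>{n..<n+k}. g ((x(n := y)) j))" by auto
  with assms obtain k' where "k = Suc k'" by (cases k) auto
  with k sum_fun_upd_atLeastLessThan_Suc[where m=n and k=k' and g=g and x=x and y=y]
  show "\<exists>k\<in>{..N}. c - g y < (\<Sum>j\<in>{Suc n..<Suc n+k}. g (x j))"
    by (intro bexI[of _ k']) auto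
next
  assume "\<exists>k\<in>{..N}. c - g y < (\<Sum>j\<in>{Suc n..<Suc n+k}. g (x j))"
  then obtain k where "k \<le> N" "c - g y < (\<Sum>j\<in>{Suc n..<Suc n+k}. g (x j))" by auto
  with sum_fun_upd_atLeastLessThan_Suc[where m=n and k=k and g=g and x=x and y=y]
  show "\<exists>k\<in>{..Suc N}. c < (\<Sum>j\<in>{n..<n+k}. g ((x(n := y)) j))"
    by (intro bexI[of _ "Suc k"]) auto
qed

lemma emeasure_PiM_partial_sum_exceeds_Suc:
  fixes \<nu> :: "real measure" and g :: "real \<Rightarrow> real" and n N :: nat
  assumes P: "prob_space \<nu>" and g: "g \<in> borel_measurable \<nu>" and c: "0 \<le> c"
  shows "emeasure (PiM {n..<n+Suc N} (\<lambda>_. \<nu>))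
      {x \<in> space (PiM {n..<n+Suc N} (\<lambda>_. \<nu>)). \<exists>k\<in>{..Suc N}. c < (\<Sum>j\<in>{n..<n+k}. g (x j))}
    = (\<integral>\<^sup>+y. emeasure (PiM {Suc n..<Suc n+N} (\<lambda>_. \<nu>))
      {x \<in> space (PiM {Suc n..<Suc n+N} (\<lambda>_. \<nu>)). \<exists>k\<in>{..N}. c - g y < (\<Sum>j\<in>{Suc n..<Suc n+k}. g (x j))}
      \<partial>\<nu>)"
proof -
  let ?P = "\<lambda>(n::nat) N. PiM {n..<n+N} (\<lambda>_. \<nu>)"
  let ?S = "\<lambda>n N c. {x \<in> space (?P n N). \<exists>k\<in>{..N}. c < (\<Sum>j\<in>{n..<n+k}. g (x j))}"
  have S_sets: "?S n N c \<in> sets (?P n N)" for n N c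
    using g by (rule partial_sum_exceeds_in_sets) auto
  interpret product_sigma_finite "\<lambda>_. \<nu>"
    by (simp add: product_sigma_finite_def P prob_space_imp_sigma_finite)
  have I: "{n..<n+Suc N} = insert n {Suc n..<Suc n+N}" by auto
  have shift: "indicator (?S n (Suc N) c) (x(n := y)) = indicator (?S (Suc n) N (c - g y)) x"
    if x: "x \<in> space (?P (Suc n) N)" and y: "y \<in> space \<nu>" for x y
  proof -
    have "x(n := y) \<in> space (?P n (Suc N))"
      using x y unfolding I space_PiM by (intro PiE_fun_upd) simp_all
    then have "x(n := y) \<in> ?S n (Suc N) c \<longleftrightarrow> x \<in> ?S (Suc n) N (c - g y)"
      using x partial_sum_exceeds_fun_upd_iff[OF c, where N=N and n=n and g=g and x=x and y=y]
      unfolding mem_Collect_eq by blast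
    then show ?thesis
      by (simp only: indicator_def)
  qed
  have "emeasure (?P n (Suc N)) (?S n (Suc N) c) = (\<integral>\<^sup>+x. indicator (?S n (Suc N) c) x \<partial>?P n (Suc N))"
    by (rule nn_integral_indicator[OF S_sets, symmetric])
  also have "\<dots> = (\<integral>\<^sup>+y. (\<integral>\<^sup>+x. indicator (?S n (Suc N) c) (x(n := y)) \<partial>?P (Suc n) N) \<partial>\<nu>)"
    by (rule product_nn_integral_insert_rev[of "{Suc n..<Suc n+N}" n, unfolded I[symmetric]])
      (use borel_measurable_indicator[OF S_sets[of n "Suc N" c]] in simp_all)
  also have "\<dots> = (\<integral>\<^sup>+y. (\<integral>\<^sup>+x. indicator (?S (Suc n) N (c - g y)) x \<partial>?P (Suc n) N) \<partial>\<nu>)"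
    by (intro nn_integral_cong) (rule shift)
  also have "\<dots> = (\<integral>\<^sup>+y. emeasure (?P (Suc n) N) (?S (Suc n) N (c - g y)) \<partial>\<nu>)"
    by (intro nn_integral_cong nn_integral_indicator S_sets)
  finally show ?thesis .
qed

text \<open>The moment condition makes \<open>exp (\<theta> S\<^sub>k)\<close> a supermartingale; the proof conditions on
  the first step, which shifts the level \<open>c\<close> to \<open>c - g y\<close>.\<close>

lemma emeasure_PiM_partial_sum_exceeds_le:
  fixes \<nu> :: "real measure" and g :: "real \<Rightarrow> real" and n N :: nat
  assumes P: "prob_space \<nu>" and g: "g \<in> borel_measurable \<nu>" and \<theta>: "\<theta> \<ge> 0"
    and mgf: "(\<integral>\<^sup>+y. ennreal (exp (\<theta> * g y)) \<partial>\<nu>) \<le> 1"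
  shows "emeasure (PiM {n..<n+N} (\<lambda>_. \<nu>))
     {x \<in> space (PiM {n..<n+N} (\<lambda>_. \<nu>)). \<exists>k\<in>{..N}. c < (\<Sum>j\<in>{n..<n+k}. g (x j))}
     \<le> ennreal (exp (- \<theta> * c))"
proof -
  have below_zero: "emeasure (PiM {n..<n+N} (\<lambda>_. \<nu>))
     {x \<in> space (PiM {n..<n+N} (\<lambda>_. \<nu>)). \<exists>k\<in>{..N}. c < (\<Sum>j\<in>{n..<n+k}. g (x j))}
     \<le> ennreal (exp (- \<theta> * c))" if "c < 0" for n N c
  proof -
    interpret prob_space "PiM {n..<n+N} (\<lambda>_. \<nu>)"
      by (intro prob_space_PiM P)
    have "1 \<le> exp (- \<theta> * c)"
      using mult_nonneg_nonpos[OF \<theta>, of c] that by simp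
    then show ?thesis
      by (intro order_trans[OF emeasure_le_1]) simp
  qed
  show ?thesis
  proof (induction N arbitrary: n c)
    case 0
    show ?case
      using below_zero[of c n 0] by (cases "c < 0") auto
  next
    case (Suc N)
    show ?case
    proof (cases "c < 0")
      case False
      have "emeasure (PiM {n..<n+Suc N} (\<lambda>_. \<nu>))
          {x \<in> space (PiM {n..<n+Suc N} (\<lambda>_. \<nu>)). \<exists>k\<in>{..Suc N}. c < (\<Sum>j\<in>{n..<n+k}. g (x j))}
        = (\<integral>\<^sup>+y. emeasure (PiM {Suc n..<Suc n+N} (\<lambda>_. \<nu>))
          {x \<in> space (PiM {Suc n..<Suc n+N} (\<lambda>_. \<nu>)). \<exists>k\<in>{..N}. c - g y < (\<Sum>j\<in>{Suc n..<Suc n+k}. g (x j))}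
          \<partial>\<nu>)"
        using False by (intro emeasure_PiM_partial_sum_exceeds_Suc P g) simp
      also have "\<dots> \<le> (\<integral>\<^sup>+y. ennreal (exp (- \<theta> * c)) * ennreal (exp (\<theta> * g y)) \<partial>\<nu>)"
      proof (rule nn_integral_mono)
        fix y
        have "exp (- \<theta> * (c - g y)) = exp (- \<theta> * c) * exp (\<theta> * g y)"
          by (simp add: exp_add[symmetric] algebra_simps)
        then show "emeasure (PiM {Suc n..<Suc n+N} (\<lambda>_. \<nu>))
            {x \<in> space (PiM {Suc n..<Suc n+N} (\<lambda>_. \<nu>)). \<exists>k\<in>{..N}. c - g y < (\<Sum>j\<in>{Suc n..<Suc n+k}. g (x j))}
            \<le> ennreal (exp (- \<theta> * c)) * ennreal (exp (\<theta> * g y))"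
          using Suc.IH[of "Suc n" "c - g y"] by (simp add: ennreal_mult)
      qed
      also have "\<dots> = ennreal (exp (- \<theta> * c)) * (\<integral>\<^sup>+y. ennreal (exp (\<theta> * g y)) \<partial>\<nu>)"
        using g by (intro nn_integral_cmult) measurable
      also have "\<dots> \<le> ennreal (exp (- \<theta> * c))"
        using mult_left_mono[OF mgf, of "ennreal (exp (- \<theta> * c))"] by simp
      finally show ?thesis .
    qed (rule below_zero)
  qed
qed

lemma sum_lessThan_reflect:
  fixes f :: "nat \<Rightarrow> 'a::comm_monoid_add"
  assumes "k \<le> N"
  shows "(\<Sum>j<k. f (N - Suc j)) = (\<Sum>j\<in>{N-k..<N}. f j)"
  by (rule sum.reindex_bij_witness[where i="\<lambda>j. N - Suc j" and j="\<lambda>j. N - Suc j"]) (use assms in auto)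

text \<open>Reversing the order of the coordinates preserves the product measure and exchanges
  suffix sums with prefix sums.\<close>

lemma measure_PiM_suffix_sum_exceeds_eq_prefix:
  fixes \<nu> :: "real measure" and g :: "real \<Rightarrow> real" and N :: nat
  assumes P: "prob_space \<nu>" and g: "g \<in> borel_measurable \<nu>"
  shows "measure (PiM {..<N} (\<lambda>_. \<nu>)) {x\<in>space (PiM {..<N} (\<lambda>_. \<nu>)). \<exists>k\<in>{..N}. c < (\<Sum>j\<in>{k..<N}. g (x j))}
       = measure (PiM {..<N} (\<lambda>_. \<nu>)) {x\<in>space (PiM {..<N} (\<lambda>_. \<nu>)). \<exists>k\<in>{..N}. c < (\<Sum>j<k. g (x j))}"
proof -
  let ?P = "PiM {..<N} (\<lambda>_. \<nu>)"
  let ?A = "{x\<in>space ?P. \<exists>k\<in>{..N}. c < (\<Sum>j\<in>{k..<N}. g (x j))}"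
  let ?B = "{x\<in>space ?P. \<exists>k\<in>{..N}. c < (\<Sum>j<k. g (x j))}"
  define rev where "rev = (\<lambda>x::nat\<Rightarrow>real. \<lambda>n\<in>{..<N}. x (N - Suc n))"
  have rev_distr: "distr ?P ?P rev = ?P"
    unfolding rev_def using P by (intro distr_PiM_reindex) (auto intro: inj_onI)
  have rev_meas: "rev \<in> measurable ?P ?P"
    unfolding rev_def by (intro measurable_restrict measurable_component_singleton) auto
  have B_sets: "?B \<in> sets ?P"
    using g by (rule partial_sum_exceeds_in_sets) auto
  have prefix_rev: "(\<Sum>j<k. g (rev x j)) = (\<Sum>j\<in>{N-k..<N}. g (x j))" if "k \<le> N" for x k
  proof -
    have "(\<Sum>j<k. g (rev x j)) = (\<Sum>j<k. g (x (N - Suc j)))"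
      using that unfolding rev_def by (intro sum.cong) auto
    also have "\<dots> = (\<Sum>j\<in>{N-k..<N}. g (x j))"
      using that by (rule sum_lessThan_reflect)
    finally show ?thesis .
  qed
  have "rev -` ?B \<inter> space ?P = ?A"
  proof (intro set_eqI iffI)
    fix x assume "x \<in> rev -` ?B \<inter> space ?P"
    then obtain k where "x \<in> space ?P" "k \<le> N" "c < (\<Sum>j<k. g (rev x j))" by auto
    then show "x \<in> ?A"
      by (intro CollectI conjI bexI[of _ "N - k"]) (auto simp: prefix_rev)
  next
    fix x assume "x \<in> ?A"
    then obtain k where x: "x \<in> space ?P" and k: "k \<le> N" "c < (\<Sum>j\<in>{k..<N}. g (x j))" by auto
    then have "c < (\<Sum>j<N-k. g (rev x j))"
      using prefix_rev[of "N - k" x] by simp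
    then show "x \<in> rev -` ?B \<inter> space ?P"
      using x measurable_space[OF rev_meas x] by auto
  qed
  then have "measure ?P ?A = measure (distr ?P ?P rev) ?B"
    using measure_distr[OF rev_meas B_sets] by simp
  then show ?thesis
    unfolding rev_distr .
qed

text \<open>\<open>\<theta> = -2\<mu>/\<sigma>\<^sup>2\<close> is Lundberg's adjustment coefficient: tilting the centred Gaussian by
  \<open>exp (\<theta> \<sigma> y)\<close> merely shifts its mean, and the drift term cancels the normalisation.\<close>

lemma nn_integral_exp_adjustment_normal:
  fixes h s2 mu \<theta> :: real
  assumes h: "h > 0" and s2: "s2 > 0" and \<theta>: "\<theta> = -2 * mu / s2"
  shows "(\<integral>\<^sup>+y. ennreal (exp (\<theta> * (sqrt s2 * y + mu * h)))
           \<partial>density lborel (\<lambda>x. ennreal (normal_density 0 (sqrt h) x))) = 1"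
proof -
  define m where "m = \<theta> * sqrt s2 * h"
  have tilt: "normal_density 0 (sqrt h) y * exp (\<theta> * (sqrt s2 * y + mu * h)) = normal_density m (sqrt h) y"
    for y
  proof -
    have "mu = - \<theta> * s2 / 2"
      using \<theta> s2 by simp
    moreover have "sqrt s2 * sqrt s2 = s2"
      using s2 by simp
    ultimately have "-(y - 0)\<^sup>2 / (2 * h) + \<theta> * (sqrt s2 * y + mu * h) = -(y - m)\<^sup>2 / (2 * h)"
      using h unfolding m_def by (simp add: field_simps power2_eq_square)
    then show ?thesis
      using h by (simp add: normal_density_def exp_add[symmetric])
  qed
  interpret prob_space "density lborel (\<lambda>x. ennreal (normal_density m (sqrt h) x))"
    using h by (intro prob_space_normal_density) simp
  have "(\<integral>\<^sup>+y. ennreal (exp (\<theta> * (sqrt s2 * y + mu * h)))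
           \<partial>density lborel (\<lambda>x. ennreal (normal_density 0 (sqrt h) x)))
      = (\<integral>\<^sup>+y. ennreal (normal_density 0 (sqrt h) y) * ennreal (exp (\<theta> * (sqrt s2 * y + mu * h))) \<partial>lborel)"
    by (rule nn_integral_density) measurable
  also have "\<dots> = (\<integral>\<^sup>+y. ennreal (normal_density m (sqrt h) y) \<partial>lborel)"
    by (rule nn_integral_cong) (simp add: tilt[symmetric] ennreal_mult)
  also have "\<dots> = emeasure (density lborel (\<lambda>x. ennreal (normal_density m (sqrt h) x))) UNIV"
    by (simp add: emeasure_density)
  finally show ?thesis
    using emeasure_space_1 by simp
qed

lemma std_brownian_motionD:
  assumes "std_brownian_motion M W"
  shows std_brownian_motion_prob_space: "prob_space M"
    and std_brownian_motion_measurable: "t \<ge> 0 \<Longrightarrow> W t \<in> borel_measurable M"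
    and std_brownian_motion_start: "\<omega> \<in> space M \<Longrightarrow> W 0 \<omega> = 0"
    and std_brownian_motion_continuous: "\<omega> \<in> space M \<Longrightarrow> continuous_on {0..} (\<lambda>t. W t \<omega>)"
    and std_brownian_motion_increment_distributed: "0 \<le> s \<Longrightarrow> s < t \<Longrightarrow>
      distributed M lborel (\<lambda>\<omega>. W t \<omega> - W s \<omega>) (normal_density 0 (sqrt (t - s)))"
    and std_brownian_motion_indep_increments: "sorted_wrt (<) ts \<Longrightarrow> (\<forall>t\<in>set ts. 0 \<le> t) \<Longrightarrow>
      prob_space.indep_vars M (\<lambda>_. borel) (\<lambda>i \<omega>. W (ts ! Suc i) \<omega> - W (ts ! i) \<omega>) {..<length ts - 1}"
  using assms unfolding std_brownian_motion_def by blast+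

lemma std_brownian_motion_indep_grid_increments:
  fixes M :: "'a measure" and W :: "real \<Rightarrow> 'a \<Rightarrow> real" and h :: real and N :: nat
  assumes BM: "std_brownian_motion M W" and h: "h > 0"
  shows "prob_space.indep_vars M (\<lambda>_. borel) (\<lambda>j \<omega>. W (real (Suc j) * h) \<omega> - W (real j * h) \<omega>) {..<N}"
proof -
  interpret prob_space M
    using BM by (rule std_brownian_motion_prob_space)
  define ts where "ts = map (\<lambda>k. real k * h) [0..<Suc N]"
  have "sorted_wrt (<) ts"
    unfolding ts_def sorted_wrt_map by (rule sorted_wrt_mono_rel[OF _ sorted_wrt_upt]) (use h in auto)
  moreover have "\<forall>t\<in>set ts. 0 \<le> t"
    unfolding ts_def using h by auto
  ultimately have "indep_vars (\<lambda>_. borel) (\<lambda>i \<omega>. W (ts ! Suc i) \<omega> - W (ts ! i) \<omega>) {..<length ts - 1}"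
    by (rule std_brownian_motion_indep_increments[OF BM])
  moreover have "length ts - 1 = N"
    unfolding ts_def by simp
  moreover have "(\<lambda>\<omega>. W (ts ! Suc i) \<omega> - W (ts ! i) \<omega>) = (\<lambda>\<omega>. W (real (Suc i) * h) \<omega> - W (real i * h) \<omega>)"
    if "i < N" for i
    using that unfolding ts_def by (auto simp: nth_append simp del: upt_Suc)
  ultimately show ?thesis
    by (subst indep_vars_cong[OF refl _ refl]) auto
qed

lemma std_brownian_motion_grid_increments:
  fixes M :: "'a measure" and W :: "real \<Rightarrow> 'a \<Rightarrow> real" and h :: real and N :: nat
  assumes BM: "std_brownian_motion M W" and h: "h > 0" and N: "N > 0"
  defines "\<nu> \<equiv> density lborel (\<lambda>x. ennreal (normal_density 0 (sqrt h) x))"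
    and "V \<equiv> \<lambda>\<omega>. \<lambda>j\<in>{..<N}. W (real (Suc j) * h) \<omega> - W (real j * h) \<omega>"
  shows "V \<in> measurable M (PiM {..<N} (\<lambda>_. \<nu>))"
    and "distr M (PiM {..<N} (\<lambda>_. \<nu>)) V = PiM {..<N} (\<lambda>_. \<nu>)"
proof -
  interpret prob_space M
    using BM by (rule std_brownian_motion_prob_space)
  define D where "D = (\<lambda>j \<omega>. W (real (Suc j) * h) \<omega> - W (real j * h) \<omega>)"
  have V_def': "V = (\<lambda>\<omega>. \<lambda>j\<in>{..<N}. D j \<omega>)"
    unfolding V_def D_def ..
  have sets_PiM: "sets (PiM {..<N} (\<lambda>_. borel)) = sets (PiM {..<N} (\<lambda>_. \<nu>))"
    by (rule sets_PiM_cong) (simp_all add: \<nu>_def)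
  have D_meas: "D j \<in> borel_measurable M" for j
    unfolding D_def using h by (intro borel_measurable_diff std_brownian_motion_measurable[OF BM]) auto
  have D_distr: "distr M borel (D j) = \<nu>" for j
  proof -
    have "distributed M lborel (D j) (normal_density 0 (sqrt (real (Suc j) * h - real j * h)))"
      unfolding D_def using h by (intro std_brownian_motion_increment_distributed[OF BM]) auto
    then have "distr M lborel (D j) = \<nu>"
      unfolding distributed_def \<nu>_def by (simp add: algebra_simps)
    moreover have "distr M borel (D j) = distr M lborel (D j)"
      by (rule distr_cong) auto
    ultimately show ?thesis by simp
  qed
  have D_indep: "indep_vars (\<lambda>_. borel) D {..<N}"
    unfolding D_def using BM h by (rule std_brownian_motion_indep_grid_increments)
  have "V \<in> measurable M (PiM {..<N} (\<lambda>_. borel))"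
    unfolding V_def' by (intro measurable_restrict D_meas)
  then show V_meas: "V \<in> measurable M (PiM {..<N} (\<lambda>_. \<nu>))"
    using measurable_cong_sets[OF refl[of "sets M"] sets_PiM] by simp
  have "distr M (PiM {..<N} (\<lambda>_. borel)) V = PiM {..<N} (\<lambda>i. distr M borel (D i))"
    unfolding V_def' using N D_meas D_indep by (subst indep_vars_iff_distr_eq_PiM[symmetric]) auto
  also have "\<dots> = PiM {..<N} (\<lambda>_. \<nu>)"
    by (rule PiM_cong) (auto simp: D_distr)
  also have "distr M (PiM {..<N} (\<lambda>_. borel)) V = distr M (PiM {..<N} (\<lambda>_. \<nu>)) V"
    by (rule distr_cong[OF refl sets_PiM]) simp
  finally show "distr M (PiM {..<N} (\<lambda>_. \<nu>)) V = PiM {..<N} (\<lambda>_. \<nu>)" .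
qed

lemma drifted_bm_grid_eq_sum:
  assumes "W 0 \<omega> = 0"
  shows "drifted_bm W mu s2 (real k * h) \<omega>
       = (\<Sum>j<k. sqrt s2 * (W (real (Suc j) * h) \<omega> - W (real j * h) \<omega>) + mu * h)"
  using sum_lessThan_telescope[of "\<lambda>j. W (real j * h) \<omega>" k] assms
  by (simp add: drifted_bm_def sum.distrib sum_distrib_left[symmetric])

lemma measure_grid_drifted_bm_eq_random_walk:
  fixes M :: "'a measure" and W :: "real \<Rightarrow> 'a \<Rightarrow> real" and N :: nat and h mu s2 :: real
  assumes BM: "std_brownian_motion M W" and h: "h > 0" and N: "N > 0" and t: "t = real N * h"
  defines "\<nu> \<equiv> density lborel (\<lambda>x. ennreal (normal_density 0 (sqrt h) x))"
    and "g \<equiv> \<lambda>y. sqrt s2 * y + mu * h"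
  shows "measure M {\<omega>\<in>space M. \<exists>k\<in>{..N}. a < drifted_bm W mu s2 t \<omega> - drifted_bm W mu s2 (real k * h) \<omega>}
       = measure (PiM {..<N} (\<lambda>_. \<nu>)) {x\<in>space (PiM {..<N} (\<lambda>_. \<nu>)). \<exists>k\<in>{..N}. a < (\<Sum>j\<in>{k..<N}. g (x j))}"
    and "measure M {\<omega>\<in>space M. \<exists>k\<in>{..N}. a < drifted_bm W mu s2 (real k * h) \<omega>}
       = measure (PiM {..<N} (\<lambda>_. \<nu>)) {x\<in>space (PiM {..<N} (\<lambda>_. \<nu>)). \<exists>k\<in>{..N}. a < (\<Sum>j<k. g (x j))}"
proof -
  define V where "V = (\<lambda>\<omega>. \<lambda>j\<in>{..<N}. W (real (Suc j) * h) \<omega> - W (real j * h) \<omega>)"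
  let ?P = "PiM {..<N} (\<lambda>_. \<nu>)"
  have V_meas: "V \<in> measurable M ?P" and V_distr: "distr M ?P V = ?P"
    using std_brownian_motion_grid_increments[OF BM h N] unfolding \<nu>_def V_def by blast+
  have pull_back: "measure M (V -` S \<inter> space M) = measure ?P S" if "S \<in> sets ?P" for S
    using measure_distr[OF V_meas that] V_distr by simp
  have g: "g \<in> borel_measurable \<nu>"
    unfolding g_def \<nu>_def by simp
  have prefix: "drifted_bm W mu s2 (real k * h) \<omega> = (\<Sum>j<k. g (V \<omega> j))"
    if "\<omega> \<in> space M" "k \<le> N" for \<omega> k
    using that std_brownian_motion_start[OF BM that(1)]
    by (simp add: drifted_bm_grid_eq_sum g_def V_def)
  have suffix: "drifted_bm W mu s2 t \<omega> - drifted_bm W mu s2 (real k * h) \<omega> = (\<Sum>j\<in>{k..<N}. g (V \<omega> j))"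
    if "\<omega> \<in> space M" "k \<le> N" for \<omega> k
    using t prefix[OF that(1) order_refl] prefix[OF that] that(2)
      sum.atLeastLessThan_concat[of 0 k N "\<lambda>j. g (V \<omega> j)"]
    by (simp add: atLeast0LessThan)
  let ?A = "{x\<in>space ?P. \<exists>k\<in>{..N}. a < (\<Sum>j\<in>{k..<N}. g (x j))}"
  let ?B = "{x\<in>space ?P. \<exists>k\<in>{..N}. a < (\<Sum>j<k. g (x j))}"
  have A_sets: "?A \<in> sets ?P" and B_sets: "?B \<in> sets ?P"
    using g by (auto intro!: partial_sum_exceeds_in_sets)
  have "V -` ?A \<inter> space M
      = {\<omega>\<in>space M. \<exists>k\<in>{..N}. a < drifted_bm W mu s2 t \<omega> - drifted_bm W mu s2 (real k * h) \<omega>}"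
    using measurable_space[OF V_meas] by (auto simp: suffix)
  with pull_back[OF A_sets]
  show "measure M {\<omega>\<in>space M. \<exists>k\<in>{..N}. a < drifted_bm W mu s2 t \<omega> - drifted_bm W mu s2 (real k * h) \<omega>}
       = measure ?P ?A"
    by simp
  have "V -` ?B \<inter> space M = {\<omega>\<in>space M. \<exists>k\<in>{..N}. a < drifted_bm W mu s2 (real k * h) \<omega>}"
    using measurable_space[OF V_meas] by (auto simp: prefix)
  with pull_back[OF B_sets]
  show "measure M {\<omega>\<in>space M. \<exists>k\<in>{..N}. a < drifted_bm W mu s2 (real k * h) \<omega>} = measure ?P ?B"
    by simp
qed

lemma measure_grid_drifted_bm_exceeds:
  fixes M :: "'a measure" and W :: "real \<Rightarrow> 'a \<Rightarrow> real" and N :: nat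
  assumes BM: "std_brownian_motion M W" and s2: "s2 > 0" and t: "t > 0" and N: "N > 0"
    and mu: "mu \<le> 0"
  shows "measure M {\<omega>\<in>space M. \<exists>k\<in>{..N}.
            a < drifted_bm W mu s2 t \<omega> - drifted_bm W mu s2 (real k * (t / real N)) \<omega>}
       = measure M {\<omega>\<in>space M. \<exists>k\<in>{..N}. a < drifted_bm W mu s2 (real k * (t / real N)) \<omega>}"
    and "measure M {\<omega>\<in>space M. \<exists>k\<in>{..N}. a < drifted_bm W mu s2 (real k * (t / real N)) \<omega>}
       \<le> exp (2 * mu * a / s2)"
proof -
  define h where "h = t / real N"
  have h: "h > 0" and tN: "t = real N * h"
    using t N by (simp_all add: h_def)
  define \<nu> where "\<nu> = density lborel (\<lambda>x. ennreal (normal_density 0 (sqrt h) x))"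
  define g where "g = (\<lambda>y. sqrt s2 * y + mu * h)"
  define \<theta> where "\<theta> = -2 * mu / s2"
  let ?P = "PiM {..<N} (\<lambda>_. \<nu>)"
  let ?B = "{x\<in>space ?P. \<exists>k\<in>{..N}. a < (\<Sum>j<k. g (x j))}"
  have \<nu>: "prob_space \<nu>"
    unfolding \<nu>_def using h by (intro prob_space_normal_density) simp
  have g: "g \<in> borel_measurable \<nu>"
    unfolding g_def \<nu>_def by simp
  let ?A = "{x\<in>space ?P. \<exists>k\<in>{..N}. a < (\<Sum>j\<in>{k..<N}. g (x j))}"
  have A: "measure M {\<omega>\<in>space M. \<exists>k\<in>{..N}.
      a < drifted_bm W mu s2 t \<omega> - drifted_bm W mu s2 (real k * h) \<omega>} = measure ?P ?A"
    unfolding \<nu>_def g_def by (rule measure_grid_drifted_bm_eq_random_walk(1)[OF BM h N tN])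
  have B: "measure M {\<omega>\<in>space M. \<exists>k\<in>{..N}. a < drifted_bm W mu s2 (real k * h) \<omega>} = measure ?P ?B"
    unfolding \<nu>_def g_def by (rule measure_grid_drifted_bm_eq_random_walk(2)[OF BM h N tN])
  show "measure M {\<omega>\<in>space M. \<exists>k\<in>{..N}.
            a < drifted_bm W mu s2 t \<omega> - drifted_bm W mu s2 (real k * (t / real N)) \<omega>}
       = measure M {\<omega>\<in>space M. \<exists>k\<in>{..N}. a < drifted_bm W mu s2 (real k * (t / real N)) \<omega>}"
    unfolding h_def[symmetric] A B using \<nu> g by (rule measure_PiM_suffix_sum_exceeds_eq_prefix)
  interpret P: prob_space ?P
    using \<nu> by (rule prob_space_PiM)
  have "\<theta> \<ge> 0"
    using mu s2 by (simp add: \<theta>_def divide_nonpos_pos)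
  moreover have "(\<integral>\<^sup>+y. ennreal (exp (\<theta> * g y)) \<partial>\<nu>) \<le> 1"
    using nn_integral_exp_adjustment_normal[OF h s2 \<theta>_def] unfolding g_def \<nu>_def by simp
  ultimately have "emeasure ?P ?B \<le> ennreal (exp (- \<theta> * a))"
    using emeasure_PiM_partial_sum_exceeds_le[OF \<nu> g, of \<theta> 0 N a] by (simp add: atLeast0LessThan)
  moreover have "- \<theta> * a = 2 * mu * a / s2"
    by (simp add: \<theta>_def)
  ultimately show "measure M {\<omega>\<in>space M. \<exists>k\<in>{..N}. a < drifted_bm W mu s2 (real k * (t / real N)) \<omega>}
       \<le> exp (2 * mu * a / s2)"
    unfolding h_def[symmetric] B by (simp add: P.emeasure_eq_measure)
qed

lemma dyadic_approx_below:
  fixes t s d :: real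
  assumes t: "t > 0" and s: "0 \<le> s" "s \<le> t" and d: "d > 0"
  obtains n k :: nat where "k \<le> 2 ^ n" "real k * (t / 2 ^ n) \<le> s" "s - real k * (t / 2 ^ n) < d"
proof -
  obtain n where n: "(1/2::real) ^ n < d / t"
    using real_arch_pow_inv[of "d / t" "1/2::real"] d t by auto
  define q where "q = s * 2 ^ n / t"
  define k where "k = nat \<lfloor>q\<rfloor>"
  have q: "0 \<le> q" "q \<le> 2 ^ n"
    using s t by (simp_all add: q_def field_simps)
  then have k: "real k \<le> q" "q < real k + 1"
    unfolding k_def by linarith+
  have "real k \<le> 2 ^ n"
    using k q by linarith
  then have "k \<le> 2 ^ n"
    by (metis of_nat_le_iff of_nat_numeral of_nat_power)
  moreover have "real k * (t / 2 ^ n) \<le> s" and "s - real k * (t / 2 ^ n) < d"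
  proof -
    have h: "t / 2 ^ n > 0" and "t / 2 ^ n < d"
      using n t by (simp_all add: power_divide field_simps)
    moreover have "s = q * (t / 2 ^ n)"
      using t by (simp add: q_def)
    moreover have "real k * (t / 2 ^ n) \<le> q * (t / 2 ^ n)"
      using k h by (intro mult_right_mono) auto
    moreover have "q * (t / 2 ^ n) < real k * (t / 2 ^ n) + t / 2 ^ n"
      using mult_strict_right_mono[OF k(2) h] by (simp add: distrib_right add_divide_distrib)
    ultimately show "real k * (t / 2 ^ n) \<le> s" and "s - real k * (t / 2 ^ n) < d"
      by linarith+
  qed
  ultimately show ?thesis
    by (rule that)
qed

lemma dyadic_grid_mem:
  fixes t :: real
  assumes "t \<ge> 0" and "k \<le> (2::nat) ^ n"
  shows "real k * (t / 2 ^ n) \<in> {0..t}"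
proof -
  have "real k \<le> 2 ^ n"
    using assms(2) by (metis of_nat_le_iff of_nat_numeral of_nat_power)
  then have "real k * (t / 2 ^ n) \<le> 2 ^ n * (t / 2 ^ n)"
    using assms(1) by (intro mult_right_mono) auto
  then show ?thesis
    using assms(1) by simp
qed

lemma continuous_on_exceeds_iff_dyadic:
  fixes F :: "real \<Rightarrow> real"
  assumes t: "t > 0" and F: "continuous_on {0..t} F"
  shows "(\<exists>s\<in>{0..t}. a < F s) \<longleftrightarrow> (\<exists>n. \<exists>k\<in>{..(2::nat) ^ n}. a < F (real k * (t / 2 ^ n)))"
proof
  assume "\<exists>s\<in>{0..t}. a < F s"
  then obtain s where s: "0 \<le> s" "s \<le> t" "a < F s" by auto
  then obtain d where d: "d > 0" and close: "\<And>s'. s' \<in> {0..t} \<Longrightarrow> dist s' s < d \<Longrightarrow> dist (F s') (F s) < F s - a"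
    using F unfolding continuous_on_iff by (metis atLeastAtMost_iff diff_gt_0_iff_gt)
  obtain n k :: nat where k: "k \<le> 2 ^ n" "real k * (t / 2 ^ n) \<le> s" "s - real k * (t / 2 ^ n) < d"
    using dyadic_approx_below[OF t s(1,2) d] .
  have "real k * (t / 2 ^ n) \<in> {0..t}"
    using k s t by auto
  with close k s have "a < F (real k * (t / 2 ^ n))"
    by (fastforce simp: dist_real_def abs_less_iff)
  with k show "\<exists>n. \<exists>k\<in>{..(2::nat) ^ n}. a < F (real k * (t / 2 ^ n))"
    by auto
next
  assume "\<exists>n. \<exists>k\<in>{..(2::nat) ^ n}. a < F (real k * (t / 2 ^ n))"
  then obtain n k where k: "k \<le> (2::nat) ^ n" "a < F (real k * (t / 2 ^ n))" by auto
  with dyadic_grid_mem[of t k n] less_imp_le[OF t] show "\<exists>s\<in>{0..t}. a < F s" by blast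
qed

lemma measure_dyadic_exceeds_tendsto:
  fixes M :: "'a measure" and \<Phi> :: "'a \<Rightarrow> real \<Rightarrow> real" and t :: real
  assumes P: "prob_space M" and t: "t > 0"
    and cont: "\<And>\<omega>. \<omega> \<in> space M \<Longrightarrow> continuous_on {0..t} (\<Phi> \<omega>)"
    and meas: "\<And>s. s \<in> {0..t} \<Longrightarrow> (\<lambda>\<omega>. \<Phi> \<omega> s) \<in> borel_measurable M"
  shows "{\<omega>\<in>space M. \<exists>s\<in>{0..t}. a < \<Phi> \<omega> s} \<in> sets M"
    and "(\<lambda>n. measure M {\<omega>\<in>space M. \<exists>k\<in>{..(2::nat) ^ n}. a < \<Phi> \<omega> (real k * (t / 2 ^ n))})
          \<longlonglongrightarrow> measure M {\<omega>\<in>space M. \<exists>s\<in>{0..t}. a < \<Phi> \<omega> s}"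
proof -
  interpret prob_space M by (rule P)
  define E where "E n = {\<omega>\<in>space M. \<exists>k\<in>{..(2::nat) ^ n}. a < \<Phi> \<omega> (real k * (t / 2 ^ n))}" for n
  have E_sets: "E n \<in> sets M" for n
  proof -
    have "E n = (\<Union>k\<in>{..(2::nat) ^ n}. {\<omega>\<in>space M. a < \<Phi> \<omega> (real k * (t / 2 ^ n))})"
      unfolding E_def by auto
    also have "\<dots> \<in> sets M"
      using meas[OF dyadic_grid_mem] t by auto
    finally show ?thesis .
  qed
  have "incseq E"
  proof (rule incseq_SucI)
    show "E n \<subseteq> E (Suc n)" for n
    proof
      fix \<omega> assume "\<omega> \<in> E n"
      then obtain k where "\<omega> \<in> space M" "k \<le> 2 ^ n" "a < \<Phi> \<omega> (real k * (t / 2 ^ n))"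
        unfolding E_def by auto
      moreover have "real (2 * k) * (t / 2 ^ Suc n) = real k * (t / 2 ^ n)"
        by simp
      ultimately show "\<omega> \<in> E (Suc n)"
        unfolding E_def by (intro CollectI conjI bexI[of _ "2 * k"]) auto
    qed
  qed
  moreover have U: "{\<omega>\<in>space M. \<exists>s\<in>{0..t}. a < \<Phi> \<omega> s} = (\<Union>n. E n)"
  proof -
    have "(\<exists>s\<in>{0..t}. a < \<Phi> \<omega> s) \<longleftrightarrow> (\<exists>n. \<omega> \<in> E n)" if "\<omega> \<in> space M" for \<omega>
      using continuous_on_exceeds_iff_dyadic[OF t cont[OF that]] that unfolding E_def by simp
    moreover have "E n \<subseteq> space M" for n
      unfolding E_def by auto
    ultimately show ?thesis
      by blast
  qed
  ultimately show "(\<lambda>n. measure M (E n)) \<longlonglongrightarrow> measure M {\<omega>\<in>space M. \<exists>s\<in>{0..t}. a < \<Phi> \<omega> s}"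
    using E_sets by (auto intro: finite_Lim_measure_incseq)
  show "{\<omega>\<in>space M. \<exists>s\<in>{0..t}. a < \<Phi> \<omega> s} \<in> sets M"
    unfolding U using E_sets by auto
qed

lemma continuous_on_drifted_bm:
  fixes W :: "real \<Rightarrow> 'a \<Rightarrow> real"
  assumes "continuous_on S (\<lambda>s. W s \<omega>)"
  shows "continuous_on S (\<lambda>s. drifted_bm W mu s2 s \<omega>)"
  using assms unfolding drifted_bm_def by (intro continuous_intros)

text \<open>As the free process starts at 0, the reflection term is exactly its running minimum.\<close>

lemma reflected_bm_gt_iff:
  assumes W0: "W 0 \<omega> = 0" and cont: "continuous_on {0..t} (\<lambda>s. W s \<omega>)" and t: "t \<ge> 0"
  shows "b + a < reflected_bm W mu s2 b t \<omega> \<longleftrightarrow>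
    (\<exists>s\<in>{0..t}. a < drifted_bm W mu s2 t \<omega> - drifted_bm W mu s2 s \<omega>)"
proof -
  let ?X = "\<lambda>s. drifted_bm W mu s2 s \<omega>"
  let ?S = "?X ` {0..t}"
  have bdd: "bdd_below ?S"
    using compact_continuous_image[OF continuous_on_drifted_bm[where W=W and \<omega>=\<omega>, OF cont] compact_Icc]
    by (intro bounded_imp_bdd_below compact_imp_bounded)
  have "0 \<in> ?S"
    using t W0 by (auto simp: drifted_bm_def intro!: image_eqI[of _ _ 0])
  then have "Inf ?S \<le> 0"
    using bdd by (rule cInf_lower)
  then have "reflected_bm W mu s2 b t \<omega> = b + ?X t - Inf ?S"
    unfolding reflected_bm_def by simp
  then have "b + a < reflected_bm W mu s2 b t \<omega> \<longleftrightarrow> Inf ?S < ?X t - a"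
    by linarith
  also have "\<dots> \<longleftrightarrow> (\<exists>x\<in>?S. x < ?X t - a)"
    using t bdd by (intro cInf_less_iff) auto
  also have "\<dots> \<longleftrightarrow> (\<exists>s\<in>{0..t}. ?X s < ?X t - a)"
    by simp
  also have "\<dots> \<longleftrightarrow> (\<exists>s\<in>{0..t}. a < ?X t - ?X s)"
    by (intro bex_cong refl) linarith
  finally show ?thesis .
qed

lemma measure_drifted_bm_exceeds:
  fixes M :: "'a measure" and W :: "real \<Rightarrow> 'a \<Rightarrow> real"
  assumes BM: "std_brownian_motion M W" and s2: "s2 > 0" and t: "t > 0" and mu: "mu \<le> 0"
  shows "{\<omega>\<in>space M. \<exists>s\<in>{0..t}. a < drifted_bm W mu s2 s \<omega>} \<in> sets M"
    and "measure M {\<omega>\<in>space M. \<exists>s\<in>{0..t}. a < drifted_bm W mu s2 t \<omega> - drifted_bm W mu s2 s \<omega>}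
       = measure M {\<omega>\<in>space M. \<exists>s\<in>{0..t}. a < drifted_bm W mu s2 s \<omega>}"
    and "measure M {\<omega>\<in>space M. \<exists>s\<in>{0..t}. a < drifted_bm W mu s2 s \<omega>} \<le> exp (2 * mu * a / s2)"
proof -
  let ?X = "drifted_bm W mu s2"
  note P = std_brownian_motion_prob_space[OF BM]
  have cont: "continuous_on {0..t} (\<lambda>s. ?X s \<omega>)" if "\<omega> \<in> space M" for \<omega>
    using std_brownian_motion_continuous[OF BM that]
    by (intro continuous_on_drifted_bm continuous_on_subset[where t="{0..t}"]) auto
  have meas: "(\<lambda>\<omega>. ?X s \<omega>) \<in> borel_measurable M" if "s \<in> {0..t}" for s
    using std_brownian_motion_measurable[OF BM] that unfolding drifted_bm_def by auto
  have incr: "(\<lambda>n. measure M {\<omega>\<in>space M. \<exists>k\<in>{..(2::nat) ^ n}. a < ?X t \<omega> - ?X (real k * (t / 2 ^ n)) \<omega>})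
      \<longlonglongrightarrow> measure M {\<omega>\<in>space M. \<exists>s\<in>{0..t}. a < ?X t \<omega> - ?X s \<omega>}"
    using t cont meas by (intro measure_dyadic_exceeds_tendsto(2)[OF P t]) (auto intro!: continuous_on_diff)
  have max: "(\<lambda>n. measure M {\<omega>\<in>space M. \<exists>k\<in>{..(2::nat) ^ n}. a < ?X (real k * (t / 2 ^ n)) \<omega>})
      \<longlonglongrightarrow> measure M {\<omega>\<in>space M. \<exists>s\<in>{0..t}. a < ?X s \<omega>}"
    using cont meas by (rule measure_dyadic_exceeds_tendsto(2)[OF P t])
  show "{\<omega>\<in>space M. \<exists>s\<in>{0..t}. a < ?X s \<omega>} \<in> sets M"
    using cont meas by (rule measure_dyadic_exceeds_tendsto(1)[OF P t])
  note grid = measure_grid_drifted_bm_exceeds[OF BM s2 t _ mu, of "2 ^ n" a for n]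
  show "measure M {\<omega>\<in>space M. \<exists>s\<in>{0..t}. a < ?X t \<omega> - ?X s \<omega>}
      = measure M {\<omega>\<in>space M. \<exists>s\<in>{0..t}. a < ?X s \<omega>}"
    using incr max grid(1) by (auto intro: LIMSEQ_unique)
  show "measure M {\<omega>\<in>space M. \<exists>s\<in>{0..t}. a < ?X s \<omega>} \<le> exp (2 * mu * a / s2)"
    using max grid(2) by (auto intro: LIMSEQ_le_const2)
qed

lemma mono_on_bounded_tendsto_at_top:
  fixes f :: "real \<Rightarrow> real"
  assumes mono: "mono_on {0<..} f" and bound: "\<And>t. 0 < t \<Longrightarrow> f t \<le> B"
  shows "(f \<longlongrightarrow> (SUP t\<in>{0<..}. f t)) at_top"
proof (rule increasing_tendsto)
  have bdd: "bdd_above (f ` {0<..})"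
    using bound by (intro bdd_aboveI2) auto
  show "eventually (\<lambda>t. f t \<le> (SUP t\<in>{0<..}. f t)) at_top"
    using eventually_gt_at_top[of 0] by eventually_elim (use bdd in \<open>auto intro: cSUP_upper\<close>)
  fix y assume "y < (SUP t\<in>{0<..}. f t)"
  then obtain t0 where t0: "0 < t0" "y < f t0"
    using less_cSUP_iff[OF _ bdd] by auto
  have "f t0 \<le> f t" if "t0 \<le> t" for t
    using mono t0 that by (auto intro: mono_onD)
  with t0 show "eventually (\<lambda>t. y < f t) at_top"
    by (intro eventually_mono[OF eventually_ge_at_top[of t0]]) (blast intro: order.strict_trans2)
qed

lemma measure_reflected_bm_exceeds_eq:
  fixes M :: "'a measure" and W :: "real \<Rightarrow> 'a \<Rightarrow> real"
  assumes BM: "std_brownian_motion M W" and s2: "s2 > 0" and t: "t > 0" and mu: "mu \<le> 0"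
  shows "measure M {\<omega>\<in>space M. b + a < reflected_bm W mu s2 b t \<omega>}
       = measure M {\<omega>\<in>space M. \<exists>s\<in>{0..t}. a < drifted_bm W mu s2 s \<omega>}"
proof -
  have "b + a < reflected_bm W mu s2 b t \<omega> \<longleftrightarrow>
      (\<exists>s\<in>{0..t}. a < drifted_bm W mu s2 t \<omega> - drifted_bm W mu s2 s \<omega>)" if "\<omega> \<in> space M" for \<omega>
    using std_brownian_motion_start[OF BM that] std_brownian_motion_continuous[OF BM that] t
    by (intro reflected_bm_gt_iff continuous_on_subset[where t="{0..t}"]) auto
  then have "{\<omega>\<in>space M. b + a < reflected_bm W mu s2 b t \<omega>}
      = {\<omega>\<in>space M. \<exists>s\<in>{0..t}. a < drifted_bm W mu s2 t \<omega> - drifted_bm W mu s2 s \<omega>}"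
    by auto
  then show ?thesis
    using measure_drifted_bm_exceeds(2)[OF BM s2 t mu] by simp
qed

lemma reflected_bm_overflow_tendsto:
  fixes M :: "'a measure" and W :: "real \<Rightarrow> 'a \<Rightarrow> real"
  assumes BM: "std_brownian_motion M W" and s2: "s2 > 0" and mu: "mu \<le> 0"
  obtains L where "((\<lambda>t. measure M {\<omega>\<in>space M. b + a < reflected_bm W mu s2 b t \<omega>}) \<longlongrightarrow> L) at_top"
    and "0 \<le> L" and "L \<le> exp (2 * mu * a / s2)"
proof -
  interpret prob_space M
    using BM by (rule std_brownian_motion_prob_space)
  define G where "G t = {\<omega>\<in>space M. \<exists>s\<in>{0..t}. a < drifted_bm W mu s2 s \<omega>}" for t
  define f where "f t = measure M {\<omega>\<in>space M. b + a < reflected_bm W mu s2 b t \<omega>}" for t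
  have f_eq: "f t = measure M (G t)" if "t > 0" for t
    unfolding f_def G_def using BM s2 that mu by (rule measure_reflected_bm_exceeds_eq)
  have "mono_on {0<..} f"
  proof (rule mono_onI)
    fix t t' :: real assume "t \<in> {0<..}" "t' \<in> {0<..}" "t \<le> t'"
    moreover have "G t \<subseteq> G t'"
      using \<open>t \<le> t'\<close> unfolding G_def by auto
    ultimately show "f t \<le> f t'"
      using measure_drifted_bm_exceeds(1)[OF BM s2 _ mu] by (auto simp: f_eq G_def intro!: finite_measure_mono)
  qed
  moreover have bound: "f t \<le> exp (2 * mu * a / s2)" if "t > 0" for t
    using measure_drifted_bm_exceeds(3)[OF BM s2 that mu] f_eq[OF that] by (simp add: G_def)
  ultimately have lim: "(f \<longlongrightarrow> (SUP t\<in>{0<..}. f t)) at_top"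
    by (rule mono_on_bounded_tendsto_at_top)
  show ?thesis
  proof (rule that)
    show "((\<lambda>t. measure M {\<omega>\<in>space M. b + a < reflected_bm W mu s2 b t \<omega>}) \<longlongrightarrow> (SUP t\<in>{0<..}. f t)) at_top"
      using lim unfolding f_def .
    have "bdd_above (f ` {0<..})"
      using bound by (intro bdd_aboveI2) auto
    then have "f 1 \<le> (SUP t\<in>{0<..}. f t)"
      by (rule cSUP_upper[rotated]) simp
    then show "0 \<le> (SUP t\<in>{0<..}. f t)"
      unfolding f_def by (meson measure_nonneg order_trans)
    show "(SUP t\<in>{0<..}. f t) \<le> exp (2 * mu * a / s2)"
      using bound by (intro cSUP_least) auto
  qed
qed

lemma p_overflow_le:
  fixes M :: "'a measure" and W :: "real \<Rightarrow> 'a \<Rightarrow> real" and K :: nat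
  assumes BM: "std_brownian_motion M W" and s2: "s2 > 0" and beta: "beta \<ge> 0" and K: "K \<ge> 1"
  shows "0 \<le> p_overflow M W s2 beta K" and "p_overflow M W s2 beta K \<le> 1/2 * real K powr (- beta)"
proof -
  have mu: "- delta_a beta s2 K \<le> 0"
    using K beta s2 by (simp add: delta_a_def)
  obtain L where lim: "((\<lambda>t. measure M {\<omega>\<in>space M.
        real K / 2 + real K / 2 < reflected_bm W (- delta_a beta s2 K) s2 (real K / 2) t \<omega>}) \<longlongrightarrow> L) at_top"
    and "0 \<le> L" and L: "L \<le> exp (2 * - delta_a beta s2 K * (real K / 2) / s2)"
    using reflected_bm_overflow_tendsto[OF BM s2 mu] .
  have "p_overflow M W s2 beta K = 1/2 * L"
    using tendsto_Lim[OF trivial_limit_at_top_linorder lim] unfolding p_overflow_def by simp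
  moreover have "exp (2 * - delta_a beta s2 K * (real K / 2) / s2) = real K powr (- beta)"
    using K s2 by (simp add: delta_a_def powr_def)
  ultimately show "0 \<le> p_overflow M W s2 beta K" and "p_overflow M W s2 beta K \<le> 1/2 * real K powr (- beta)"
    using \<open>0 \<le> L\<close> L by simp_all
qed

theorem lemma5:
  fixes M :: "'a measure" and W :: "real \<Rightarrow> 'a \<Rightarrow> real" and s2 beta :: real
  assumes "std_brownian_motion M W" and "s2 > 0" and "beta \<ge> 2"
  shows "(\<lambda>K. p_overflow M W s2 beta K) \<in> O(\<lambda>K. real K powr (- beta))"
proof (rule bigoI[where c = "1/2"])
  show "eventually (\<lambda>K. norm (p_overflow M W s2 beta K) \<le> 1/2 * norm (real K powr (- beta))) at_top"
    using eventually_ge_at_top[of 1]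
    by eventually_elim (use p_overflow_le[OF assms(1,2)] assms(3) in auto)
qed

end
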